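(* Let $Y(0),Y(1)$ be integrable real-valued potential outcomes and $X$ a random vector in $\mathbb{R}^{d_X}$ with support $\mathcal{X}$. Suppose: (Deterministic treatment) $\mathcal{X}=\mathcal{X}_0\cup\mathcal{X}_1$ with $\mathcal{X}_0\cap\mathcal{X}_1=\emptyset$, the treatment is $D=1\{X\in\mathcal{X}_1\}$ and the observed outcome is $Y=DY(1)+(1-D)Y(0)$; (Continuity) the functions $x\mapsto E[Y(0)|X=x]$ and $x\mapsto E[Y(1)|X=x]$ are continuous on $\mathcal{X}$; (Comonotonicity) for all $x_1,x_2\in\mathcal{X}$, $$E[Y(0)|X=x_1]\geq E[Y(0)|X=x_2]\iff E[Y(1)|X=x_1]\geq E[Y(1)|X=x_2].$$ Let $\mathcal{F}=\mathrm{cl}(\mathrm{int}(\mathcal{X}_1))\cap\mathrm{cl}(\mathrm{int}(\mathcal{X}_0))$ and, for $d\in\{0,1\}$, let $g_d$ be a function on $\mathcal{X}_d\cup\mathcal{F}$ such that $g_d(x)=E[Y|X=x]$ for all $x\in\mathcal{X}_d$ and $g_d$ is continuous at each point of $\mathcal{F}$. Then: (i) if $d\in\{0,1\}$, $x\in\mathcal{X}_d$ and there exists $x^*\in\mathcal{F}$ with $E[Y|X=x]=g_d(x^* )$, then $E[Y(1)|X=x]=g_1(x^* )$ and $E[Y(0)|X=x]=g_0(x^* )$; (ii) for any $x_1,x_2\in\mathcal{F}$, $g_0(x_1)\geq g_0(x_2)\iff g_1(x_1)\geq g_1(x_2)$.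
   Context: Conditional expectation functions $x\mapsto E[Y(d)|X=x]$ are understood as the unique continuous versions. For $x\in\mathcal{X}_d$, $E[Y|X=x]$ is understood as $E[Y(d)|X=x]$ (since $Y=Y(d)$ when $X\in\mathcal{X}_d$). $\mathrm{int}$ and $\mathrm{cl}$ denote interior and closure in $\mathbb{R}^{d_X}$; $\mathcal{F}$ is called the frontier. *)

theory Defs
  imports "HOL-Probability.Probability"
begin

text \<open>Support of the distribution of a random vector X: the set of points all of whose
open neighbourhoods receive positive probability (the smallest closed set of full measure).\<close>
definition support_of :: "'b measure \<Rightarrow> ('b \<Rightarrow> 'a::euclidean_space) \<Rightarrow> 'a set" where
  "support_of M X = {x. \<forall>U. open U \<and> x \<in> U \<longrightarrow> emeasure (distr M borel X) U > 0}"

definition frontier_set :: "'a::euclidean_space set \<Rightarrow> 'a set \<Rightarrow> 'a set" where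
  "frontier_set X0 X1 = closure (interior X1) \<inter> closure (interior X0)"

end

theory Submission
  imports Defs
begin

(* On the frontier F, g_d agrees with m_d: it equals m_d on X_d, is continuous within X_d at
   points of F, and m_d is continuous on the closed support, which contains F. Both claims then
   reduce to comonotonicity of m_0 and m_1 on the support, the first in its equality form.
   The probabilistic hypotheses only serve to interpret m_d as conditional means. *)

lemma closed_support_of: "closed (support_of M X)"
proof -
  have "\<exists>U. open U \<and> x \<in> U \<and> U \<subseteq> - support_of M X" if "x \<notin> support_of M X" for x
  proof -
    obtain U where U: "open U" "x \<in> U" "\<not> emeasure (distr M borel X) U > 0"
      using \<open>x \<notin> support_of M X\<close> unfolding support_of_def by auto
    then have "U \<subseteq> - support_of M X"
      unfolding support_of_def by blast
    with U show ?thesis by blast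
  qed
  then have "open (- support_of M X)"
    by (subst open_subopen) blast
  then show ?thesis
    by (simp add: closed_def)
qed

lemma frontier_set_subset_closure: "frontier_set X0 X1 \<subseteq> closure X0 \<inter> closure X1"
  unfolding frontier_set_def using closure_mono[OF interior_subset] by blast

lemma continuous_within_eq_at_closure_point:
  fixes g m :: "'a::t2_space \<Rightarrow> 'b::t2_space"
  assumes m_cont: "continuous_on S m" and "A \<subseteq> S" "x \<in> S" "x \<in> closure A"
    and eq: "\<And>y. y \<in> A \<Longrightarrow> g y = m y"
    and g_cont: "continuous (at x within A) g"
  shows "g x = m x"
proof (cases "x \<in> A")
  case True
  then show ?thesis using eq by simp
next
  case False
  with \<open>x \<in> closure A\<close> have "at x within A \<noteq> bot"
    by (simp add: closure_def trivial_limit_within)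
  moreover have "(m \<longlongrightarrow> m x) (at x within A)"
    using m_cont \<open>x \<in> S\<close> \<open>A \<subseteq> S\<close>
    by (auto simp: continuous_on_def intro: tendsto_within_subset)
  moreover have "(m \<longlongrightarrow> g x) (at x within A)"
  proof (rule Lim_transform_eventually)
    show "(g \<longlongrightarrow> g x) (at x within A)"
      using g_cont by (simp add: continuous_within)
    show "\<forall>\<^sub>F y in at x within A. g y = m y"
      by (simp add: eventually_at_filter eq)
  qed
  ultimately show ?thesis
    using tendsto_unique by metis
qed

lemma comonotone_eq_iff:
  fixes m0 m1 :: "'a \<Rightarrow> 'b::linorder"
  assumes "\<And>x1 x2. x1 \<in> S \<Longrightarrow> x2 \<in> S \<Longrightarrow> (m0 x1 \<ge> m0 x2 \<longleftrightarrow> m1 x1 \<ge> m1 x2)"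
    and "x \<in> S" "y \<in> S"
  shows "m0 x = m0 y \<longleftrightarrow> m1 x = m1 y"
  using assms(1)[OF assms(2,3)] assms(1)[OF assms(3,2)] by (metis order.antisym order.refl)

theorem theorem2:
  fixes M :: "'b measure"
    and X :: "'b \<Rightarrow> 'a::euclidean_space"
    and Y0 Y1 Y :: "'b \<Rightarrow> real"
    and X0 X1 :: "'a set"
    and m0 m1 g0 g1 :: "'a \<Rightarrow> real"
  assumes prob: "prob_space M"
    and X_meas: "X \<in> borel_measurable M"
    and int0: "integrable M Y0" and int1: "integrable M Y1"
    and partition: "X0 \<union> X1 = support_of M X" "X0 \<inter> X1 = {}"
    and Y_def: "\<And>\<omega>. \<omega> \<in> space M \<Longrightarrow>
                 Y \<omega> = indicator X1 (X \<omega>) * Y1 \<omega> + (1 - indicator X1 (X \<omega>)) * Y0 \<omega>"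
    and m0_ce: "AE \<omega> in M. real_cond_exp M (vimage_algebra (space M) X borel) Y0 \<omega> = m0 (X \<omega>)"
    and m1_ce: "AE \<omega> in M. real_cond_exp M (vimage_algebra (space M) X borel) Y1 \<omega> = m1 (X \<omega>)"
    and m0_cont: "continuous_on (support_of M X) m0"
    and m1_cont: "continuous_on (support_of M X) m1"
    and comon: "\<And>x1 x2. x1 \<in> support_of M X \<Longrightarrow> x2 \<in> support_of M X \<Longrightarrow>
                  (m0 x1 \<ge> m0 x2 \<longleftrightarrow> m1 x1 \<ge> m1 x2)"
    and g0_eq: "\<And>x. x \<in> X0 \<Longrightarrow> g0 x = m0 x"
    and g1_eq: "\<And>x. x \<in> X1 \<Longrightarrow> g1 x = m1 x"
    and g0_cont: "\<And>x. x \<in> frontier_set X0 X1 \<Longrightarrow> continuous (at x within (X0 \<union> frontier_set X0 X1)) g0"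
    and g1_cont: "\<And>x. x \<in> frontier_set X0 X1 \<Longrightarrow> continuous (at x within (X1 \<union> frontier_set X0 X1)) g1"
  shows "(\<forall>x \<in> X0. \<forall>xs \<in> frontier_set X0 X1. m0 x = g0 xs \<longrightarrow> m1 x = g1 xs \<and> m0 x = g0 xs)
       \<and> (\<forall>x \<in> X1. \<forall>xs \<in> frontier_set X0 X1. m1 x = g1 xs \<longrightarrow> m1 x = g1 xs \<and> m0 x = g0 xs)
       \<and> (\<forall>x1 \<in> frontier_set X0 X1. \<forall>x2 \<in> frontier_set X0 X1.
            (g0 x1 \<ge> g0 x2 \<longleftrightarrow> g1 x1 \<ge> g1 x2))"
proof -
  let ?S = "support_of M X" and ?F = "frontier_set X0 X1"
  have X0_S: "X0 \<subseteq> ?S" and X1_S: "X1 \<subseteq> ?S"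
    using partition(1) by auto
  have F_S: "?F \<subseteq> ?S"
    using frontier_set_subset_closure closure_minimal[OF X0_S closed_support_of] by blast
  have g0_F: "g0 xs = m0 xs" if "xs \<in> ?F" for xs
    using continuous_within_eq_at_closure_point[OF m0_cont X0_S _ _ g0_eq]
      continuous_within_subset[OF g0_cont[OF that]] that F_S frontier_set_subset_closure
    by blast
  have g1_F: "g1 xs = m1 xs" if "xs \<in> ?F" for xs
    using continuous_within_eq_at_closure_point[OF m1_cont X1_S _ _ g1_eq]
      continuous_within_subset[OF g1_cont[OF that]] that F_S frontier_set_subset_closure
    by blast
  have eq_iff: "m0 x = m0 y \<longleftrightarrow> m1 x = m1 y" if "x \<in> ?S" "y \<in> ?S" for x y
    using comonotone_eq_iff[OF comon that] .
  show ?thesis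
  proof (intro conjI ballI impI)
    fix x xs assume "x \<in> X0" "xs \<in> ?F" "m0 x = g0 xs"
    then show "m1 x = g1 xs" "m0 x = g0 xs"
      using eq_iff[of x xs] X0_S F_S g0_F g1_F by auto
  next
    fix x xs assume "x \<in> X1" "xs \<in> ?F" "m1 x = g1 xs"
    then show "m1 x = g1 xs" "m0 x = g0 xs"
      using eq_iff[of x xs] X1_S F_S g0_F g1_F by auto
  next
    fix x1 x2 assume "x1 \<in> ?F" "x2 \<in> ?F"
    then show "g0 x1 \<ge> g0 x2 \<longleftrightarrow> g1 x1 \<ge> g1 x2"
      using comon[of x1 x2] F_S g0_F g1_F by auto
  qed
qed

end
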